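(* Let $z_1,\dots,z_n$ and $\zeta_1,\dots,\zeta_{n+1}$ be points of $\overline E\cap U$ such that $V(z_1,\dots,z_n)=V_n(E)$ and $V(\zeta_1,\dots,\zeta_{n+1})=V_{n+1}(E)$. Then \[ \mu(\zeta_1,\dots,\zeta_{n+1})\,M(z_1,\dots,z_n)\le (n+1)\|q\|_{\infty,E}, \] where $\|q\|_{\infty,E}=\sup_{z\in E}|q(z)|$.
   Context: $U$ is the open unit disc and $E\subset U$ is a set with infinitely many points whose set $E_0$ of nontangential limit points has Lebesgue measure zero on $\partial U$ (a point $\zeta\in\partial U$ is a nontangential limit point of $E$ if some sequence $(w_n)$ in $E$ satisfies $w_n\to\zeta$ and $|w_n-\zeta|=O(1-|w_n|)$). The function $q$: if $\overline E\cap\partial U=\emptyset$, $q\equiv1$; otherwise $q$ is holomorphic on $U$ with $0<|q|<1$ on $U$ and $\lim_{z\in E,|z|\to1}q(z)=0$, normalized so that $\sup_U|q|=1$. For $Z_n=(z_1,\dots,z_n)$: $B(Z_n,z)=\prod_{j=1}^n\frac{z-z_j}{1-\overline{z_j}z}$, $B_k(Z_n,z)=\prod_{j\ne k}\frac{z-z_j}{1-\overline{z_j}z}$, $B_q(Z_n,z)=B(Z_n,z)q(z)$ (an empty product equals $1$), $Z_{j-1}=(z_1,\dots,z_{j-1})$. Define $V(Z_n)=\prod_{j=1}^n|B_q(Z_{j-1},z_j)|$, $\mu(Z_n)=\sum_{j=1}^n|B_j(Z_n,z_j)|^{-1}$, $M(Z_n)=\sup_{z\in E}|B_q(Z_n,z)|$,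 and $V_n(E)=\sup_{Z_n\in E^n}V(Z_n)$. *)

theory Defs
  imports "HOL-Analysis.Analysis"
begin

text \<open>Unit disc U is ball 0 1; its boundary is sphere 0 1. Tuples Z_n are lists.\<close>

definition bfac :: "complex \<Rightarrow> complex \<Rightarrow> complex" where
  "bfac a z = (z - a) / (1 - cnj a * z)"

definition Bl :: "complex list \<Rightarrow> complex \<Rightarrow> complex" where
  "Bl Zs z = (\<Prod>j<length Zs. bfac (Zs ! j) z)"

definition Bk :: "complex list \<Rightarrow> nat \<Rightarrow> complex \<Rightarrow> complex" where
  "Bk Zs k z = (\<Prod>j\<in>{j. j < length Zs \<and> j \<noteq> k}. bfac (Zs ! j) z)"

definition Bq :: "(complex \<Rightarrow> complex) \<Rightarrow> complex list \<Rightarrow> complex \<Rightarrow> complex" where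
  "Bq q Zs z = Bl Zs z * q z"

definition Vf :: "(complex \<Rightarrow> complex) \<Rightarrow> complex list \<Rightarrow> real" where
  "Vf q Zs = (\<Prod>j<length Zs. norm (Bq q (take j Zs) (Zs ! j)))"

definition muf :: "complex list \<Rightarrow> real" where
  "muf Zs = (\<Sum>k<length Zs. inverse (norm (Bk Zs k (Zs ! k))))"

definition Mf :: "(complex \<Rightarrow> complex) \<Rightarrow> complex set \<Rightarrow> complex list \<Rightarrow> real" where
  "Mf q E Zs = (SUP z\<in>E. norm (Bq q Zs z))"

definition Vn :: "(complex \<Rightarrow> complex) \<Rightarrow> complex set \<Rightarrow> nat \<Rightarrow> real" where
  "Vn q E n = (SUP Zs\<in>{Zs. length Zs = n \<and> set Zs \<subseteq> E}. Vf q Zs)"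

definition nontangential_limit_points :: "complex set \<Rightarrow> complex set" where
  "nontangential_limit_points E = {\<zeta>. norm \<zeta> = 1 \<and>
     (\<exists>w::nat \<Rightarrow> complex. (\<forall>n. w n \<in> E) \<and> w \<longlonglongrightarrow> \<zeta> \<and>
        (\<exists>C. \<forall>n. norm (w n - \<zeta>) \<le> C * (1 - norm (w n))))}"

text \<open>Lebesgue (arc-length) measure zero on the unit circle, via the parametrisation t \<mapsto> exp(i t).\<close>
definition circle_null :: "complex set \<Rightarrow> bool" where
  "circle_null A \<longleftrightarrow> {t\<in>{0..2*pi}. cis t \<in> A} \<in> null_sets lborel"

definition admissible_q :: "complex set \<Rightarrow> (complex \<Rightarrow> complex) \<Rightarrow> bool" where
  "admissible_q E q \<longleftrightarrow>
     (if closure E \<inter> sphere 0 1 = {} then (\<forall>z\<in>ball 0 1. q z = 1)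
      else q holomorphic_on ball 0 1 \<and>
           (\<forall>z\<in>ball 0 1. 0 < norm (q z) \<and> norm (q z) < 1) \<and>
           (\<forall>\<epsilon>>0. \<exists>\<delta>>0. \<forall>z\<in>E. norm z > 1 - \<delta> \<longrightarrow> norm (q z) < \<epsilon>) \<and>
           (SUP z\<in>ball 0 1. norm (q z)) = 1)"

end

theory Submission
  imports Defs "HOL-Complex_Analysis.Riemann_Mapping"
begin

text \<open>
  Deleting the k-th point of an extremal (n+1)-tuple \<open>\<zeta>\<close> leaves an n-tuple, and the deleted
  point contributed the factor |q(\<open>\<zeta>\<close>_k)| |B_k(\<open>\<zeta>\<close>, \<open>\<zeta>\<close>_k)| to V(\<open>\<zeta>\<close>); hence
  V_{n+1}(E) \<open>\<le>\<close> V_n(E) |q(\<open>\<zeta>\<close>_k)| |B_k(\<open>\<zeta>\<close>, \<open>\<zeta>\<close>_k)|. Appending any w in E to an extremal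
  n-tuple z gives V_n(E) |B_q(z, w)| \<open>\<le>\<close> V_{n+1}(E), i.e. V_n(E) M(z) \<open>\<le>\<close> V_{n+1}(E).
  Together, M(z) / |B_k(\<open>\<zeta>\<close>, \<open>\<zeta>\<close>_k)| \<open>\<le>\<close> |q(\<open>\<zeta>\<close>_k)| \<open>\<le>\<close> sup_E |q|, and summing over k gives
  the claim. Since the extremal points are only assumed to lie in the closure of E, the
  inequality V(Z) \<open>\<le>\<close> V_m(E) is first extended to tuples in closure E \<open>\<inter>\<close> U, using that V
  is continuous in each of its arguments.
\<close>

lemma bfac_denom_nonzero:
  assumes "norm a < 1" "norm z < 1"
  shows "1 - cnj a * z \<noteq> 0"
proof
  assume "1 - cnj a * z = 0"
  then have "norm (cnj a * z) = 1" by simp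
  moreover have "norm a * norm z \<le> norm a"
    using assms by (simp add: mult_left_le)
  then have "norm (cnj a * z) < 1"
    using assms by (simp add: norm_mult)
  ultimately show False by simp
qed

lemma norm_bfac_lt_1: "norm a < 1 \<Longrightarrow> norm z < 1 \<Longrightarrow> norm (bfac a z) < 1"
  using Moebius_function_norm_lt_1[of a z 0] by (simp add: Moebius_function_simple bfac_def)

lemma norm_bfac_commute: "norm (bfac a z) = norm (bfac z a)"
proof -
  have "cnj (1 - cnj a * z) = 1 - cnj z * a" by (simp add: mult.commute)
  then have "norm (1 - cnj a * z) = norm (1 - cnj z * a)" by (metis complex_mod_cnj)
  then show ?thesis by (simp add: bfac_def norm_divide norm_minus_commute)
qed

lemma bfac_eq_0_iff: "norm a < 1 \<Longrightarrow> norm z < 1 \<Longrightarrow> bfac a z = 0 \<longleftrightarrow> z = a"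
  using bfac_denom_nonzero[of a z] by (simp add: bfac_def)

lemma Bl_Nil [simp]: "Bl [] z = 1"
  by (simp add: Bl_def)

lemma Bl_snoc: "Bl (L @ [w]) z = Bl L z * bfac w z"
  unfolding Bl_def by (simp add: nth_append)

lemma Bl_eq_prod_list: "Bl L z = prod_list (map (\<lambda>a. bfac a z) L)"
  by (induction L rule: rev_induct) (simp_all add: Bl_snoc)

lemma norm_Bl_le_1: "set L \<subseteq> ball 0 1 \<Longrightarrow> w \<in> ball 0 1 \<Longrightarrow> norm (Bl L w) \<le> 1"
  by (induction L rule: rev_induct)
    (auto simp: Bl_snoc norm_mult intro!: mult_le_one less_imp_le[OF norm_bfac_lt_1])

lemma continuous_on_Bl:
  assumes "set L \<subseteq> ball 0 1"
  shows "continuous_on (ball 0 1) (Bl L)"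
proof -
  have "1 - cnj (L ! j) * z \<noteq> 0" if "j < length L" "z \<in> ball 0 1" for j z
  proof -
    have "L ! j \<in> ball 0 1"
      using assms nth_mem[OF that(1)] by blast
    then show ?thesis
      using that(2) by (intro bfac_denom_nonzero) auto
  qed
  then show ?thesis
    unfolding Bl_def bfac_def by (intro continuous_intros) auto
qed

lemma Bk_snoc: "k < length L \<Longrightarrow> Bk (L @ [y]) k u = Bk L k u * bfac y u"
proof -
  assume k: "k < length L"
  have "{j. j < length (L @ [y]) \<and> j \<noteq> k} = insert (length L) {j. j < length L \<and> j \<noteq> k}"
    using k by auto
  then have "Bk (L @ [y]) k u = bfac y u * (\<Prod>j\<in>{j. j < length L \<and> j \<noteq> k}. bfac ((L @ [y]) ! j) u)"
    unfolding Bk_def by (simp add: nth_append)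
  also have "(\<Prod>j\<in>{j. j < length L \<and> j \<noteq> k}. bfac ((L @ [y]) ! j) u) = Bk L k u"
    unfolding Bk_def by (rule prod.cong) (auto simp: nth_append)
  finally show ?thesis by simp
qed

lemma Bk_append_Cons: "Bk (xs @ z # ys) (length xs) u = Bl xs u * Bl ys u"
proof (induction ys rule: rev_induct)
  case Nil
  have "{j. j < length (xs @ [z]) \<and> j \<noteq> length xs} = {..<length xs}" by auto
  then show ?case unfolding Bk_def Bl_def by (simp add: nth_append)
next
  case (snoc y ys)
  then show ?case using Bk_snoc[of "length xs" "xs @ z # ys" y u] by (simp add: Bl_snoc)
qed

lemma Vf_Nil [simp]: "Vf q [] = 1"
  by (simp add: Vf_def)

lemma Vf_snoc: "Vf q (L @ [w]) = Vf q L * norm (Bq q L w)"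
  unfolding Vf_def by (simp add: nth_append)

lemma Vf_nonneg: "0 \<le> Vf q L"
  unfolding Vf_def by (simp add: prod_nonneg)

lemma Vf_append_Cons:
  "Vf q (xs @ z # ys) = Vf q (xs @ ys) * norm (q z) * norm (Bl xs z) * norm (Bl ys z)"
proof (induction ys rule: rev_induct)
  case Nil
  show ?case using Vf_snoc[of q xs z] by (simp add: Bq_def norm_mult)
next
  case (snoc y ys)
  have "Bq q (xs @ z # ys) y = Bq q (xs @ ys) y * bfac z y"
    by (simp add: Bq_def Bl_eq_prod_list)
  then show ?case
    using snoc Vf_snoc[of q "xs @ z # ys" y] Vf_snoc[of q "xs @ ys" y]
    by (simp add: Bl_snoc norm_mult norm_bfac_commute[of z y])
qed

lemma Vf_le_1:
  assumes "\<And>z. z \<in> ball 0 1 \<Longrightarrow> norm (q z) \<le> 1"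
  shows "set L \<subseteq> ball 0 1 \<Longrightarrow> Vf q L \<le> 1"
proof (induction L rule: rev_induct)
  case (snoc x xs)
  then have "norm (Bq q xs x) \<le> 1"
    using assms norm_Bl_le_1[of xs x] by (simp add: Bq_def norm_mult mult_le_one)
  with snoc show ?case by (simp add: Vf_snoc mult_le_one Vf_nonneg)
qed simp

lemma Vf_pos:
  assumes "\<And>z. z \<in> ball 0 1 \<Longrightarrow> q z \<noteq> 0"
  shows "set L \<subseteq> ball 0 1 \<Longrightarrow> distinct L \<Longrightarrow> 0 < Vf q L"
proof (induction L rule: rev_induct)
  case (snoc x xs)
  then have "Bl xs x \<noteq> 0"
    using bfac_eq_0_iff by (auto simp: Bl_eq_prod_list prod_list_zero_iff)
  with snoc assms show ?case by (simp add: Vf_snoc Bq_def)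
qed simp

lemma continuous_on_Vf_append_Cons:
  assumes "continuous_on (ball 0 1) q" "set xs \<subseteq> ball 0 1" "set ys \<subseteq> ball 0 1"
  shows "continuous_on (ball 0 1) (\<lambda>w. Vf q (xs @ w # ys))"
  unfolding Vf_append_Cons using assms by (intro continuous_intros continuous_on_Bl)

lemma le_on_closure_inter_open:
  fixes f :: "'a::metric_space \<Rightarrow> real"
  assumes "open S" "continuous_on S f" "x \<in> closure E \<inter> S" "\<And>e. e \<in> E \<Longrightarrow> f e \<le> C"
  shows "f x \<le> C"
proof -
  obtain s where s: "\<And>n. s n \<in> E" "s \<longlonglongrightarrow> x"
    using assms(3) closure_sequential by blast
  have "isCont f x"
    using assms(1-3) continuous_on_eq_continuous_at by blast
  then have "(\<lambda>n. f (s n)) \<longlonglongrightarrow> f x"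
    using s(2) isCont_tendsto_compose by blast
  then show ?thesis
    using s(1) assms(4) LIMSEQ_le_const2 by meson
qed

lemma admissible_q_continuous:
  assumes "admissible_q E q"
  shows "continuous_on (ball 0 1) q"
proof (cases "closure E \<inter> sphere 0 1 = {}")
  case True
  show ?thesis
    using continuous_on_const[of "ball 0 1" "1 :: complex"]
    by (rule continuous_on_eq) (use True assms in \<open>simp add: admissible_q_def\<close>)
next
  case False
  then show ?thesis
    using assms holomorphic_on_imp_continuous_on by (auto simp: admissible_q_def)
qed

lemma admissible_q_bounds:
  assumes "admissible_q E q" "z \<in> ball 0 1"
  shows "q z \<noteq> 0" "norm (q z) \<le> 1"
proof -
  have "q z \<noteq> 0 \<and> norm (q z) \<le> 1"
  proof (cases "closure E \<inter> sphere 0 1 = {}")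
    case False
    then have "0 < norm (q z) \<and> norm (q z) < 1"
      using assms by (simp add: admissible_q_def)
    then show ?thesis by auto
  qed (use assms in \<open>simp add: admissible_q_def\<close>)
  then show "q z \<noteq> 0" "norm (q z) \<le> 1" by auto
qed

context
  fixes E :: "complex set" and q :: "complex \<Rightarrow> complex"
  assumes E_subset: "E \<subseteq> ball 0 1" and admissible: "admissible_q E q"
begin

lemma bdd_above_Vf: "bdd_above (Vf q ` {Zs. length Zs = m \<and> set Zs \<subseteq> E})"
  using Vf_le_1 admissible_q_bounds[OF admissible] E_subset by (intro bdd_aboveI[of _ 1]) auto

lemma Vn_pos:
  assumes "infinite E"
  shows "0 < Vn q E m"
proof -
  obtain A where A: "A \<subseteq> E" "finite A" "card A = m"
    using infinite_arbitrarily_large[OF assms] by blast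
  obtain L where L: "set L = A" "distinct L"
    using finite_distinct_list[OF A(2)] by blast
  have "0 < Vf q L"
    using Vf_pos admissible_q_bounds[OF admissible] L A E_subset by auto
  also have "Vf q L \<le> Vn q E m"
    unfolding Vn_def using L A distinct_card[OF L(2)] by (intro cSUP_upper[OF _ bdd_above_Vf]) auto
  finally show ?thesis .
qed

lemma Vf_append_closure_le_Vn:
  "set Ys \<subseteq> E \<Longrightarrow> set Xs \<subseteq> closure E \<inter> ball 0 1 \<Longrightarrow>
    Vf q (Ys @ Xs) \<le> Vn q E (length Ys + length Xs)"
proof (induction Xs arbitrary: Ys)
  case Nil
  then show ?case unfolding Vn_def by (intro cSUP_upper[OF _ bdd_above_Vf]) auto
next
  case (Cons x Xs)
  have "Vf q (Ys @ x # Xs) \<le> Vn q E (length (Ys @ [x]) + length Xs)"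
  proof (rule le_on_closure_inter_open[where f = "\<lambda>w. Vf q (Ys @ w # Xs)"])
    show "continuous_on (ball 0 1) (\<lambda>w. Vf q (Ys @ w # Xs))"
      using Cons.prems E_subset admissible_q_continuous[OF admissible]
      by (intro continuous_on_Vf_append_Cons) auto
    show "Vf q (Ys @ e # Xs) \<le> Vn q E (length (Ys @ [x]) + length Xs)" if "e \<in> E" for e
      using Cons.IH[of "Ys @ [e]"] Cons.prems that by auto
  qed (use Cons.prems in auto)
  then show ?case by simp
qed

lemma Vf_closure_le_Vn: "set Xs \<subseteq> closure E \<inter> ball 0 1 \<Longrightarrow> Vf q Xs \<le> Vn q E (length Xs)"
  using Vf_append_closure_le_Vn[of "[]"] by simp

lemma Vn_mult_Mf_le:
  assumes "infinite E" "set zs \<subseteq> closure E \<inter> ball 0 1" "Vf q zs = Vn q E (length zs)"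
  shows "Vn q E (length zs) * Mf q E zs \<le> Vn q E (Suc (length zs))"
proof -
  have pos: "0 < Vn q E (length zs)"
    using Vn_pos[OF assms(1)] .
  have "Vn q E (length zs) * norm (Bq q zs w) \<le> Vn q E (Suc (length zs))" if "w \<in> E" for w
  proof -
    have "w \<in> closure E \<inter> ball 0 1"
      using that E_subset closure_subset by blast
    then show ?thesis
      using Vf_closure_le_Vn[of "zs @ [w]"] assms(2,3) by (simp add: Vf_snoc)
  qed
  then have "Mf q E zs \<le> Vn q E (Suc (length zs)) / Vn q E (length zs)"
    unfolding Mf_def using assms(1) pos
    by (intro cSUP_least) (auto simp: pos_le_divide_eq mult.commute)
  then show ?thesis
    using pos by (simp add: pos_le_divide_eq mult.commute)
qed

lemma Vn_Suc_le_Vn_mult_Bk: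
  assumes "length \<zeta>s = Suc n" "set \<zeta>s \<subseteq> closure E \<inter> ball 0 1" "Vf q \<zeta>s = Vn q E (Suc n)"
    and "k < Suc n"
  shows "Vn q E (Suc n) \<le> Vn q E n * norm (q (\<zeta>s ! k)) * norm (Bk \<zeta>s k (\<zeta>s ! k))"
proof -
  define xs ys where "xs = take k \<zeta>s" and "ys = drop (Suc k) \<zeta>s"
  have split: "\<zeta>s = xs @ \<zeta>s ! k # ys" and len: "length xs = k"
    using assms(1,4) by (simp_all add: xs_def ys_def id_take_nth_drop)
  have "set (xs @ ys) \<subseteq> closure E \<inter> ball 0 1"
    using assms(2) by (subst (asm) split) auto
  moreover have "length (xs @ ys) = n"
    using arg_cong[OF split, of length] assms(1) by simp
  ultimately have "Vf q (xs @ ys) \<le> Vn q E n"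
    using Vf_closure_le_Vn by metis
  moreover have "Vn q E (Suc n) = Vf q (xs @ ys) * norm (q (\<zeta>s ! k)) * norm (Bk \<zeta>s k (\<zeta>s ! k))"
    using assms(3) Vf_append_Cons[of q xs "\<zeta>s ! k" ys] Bk_append_Cons[of xs "\<zeta>s ! k" ys]
    by (metis split len norm_mult mult.assoc)
  ultimately show ?thesis
    by (simp add: mult_right_mono)
qed

lemma norm_q_le_SUP_closure:
  assumes "z \<in> closure E \<inter> ball 0 1"
  shows "norm (q z) \<le> (SUP w\<in>E. norm (q w))"
proof (rule le_on_closure_inter_open[OF _ _ assms])
  show "continuous_on (ball 0 1) (\<lambda>w. norm (q w))"
    using admissible_q_continuous[OF admissible] by (rule continuous_on_norm)
  have "bdd_above ((\<lambda>w. norm (q w)) ` E)"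
    using admissible_q_bounds(2)[OF admissible] E_subset by (intro bdd_aboveI[of _ 1]) auto
  then show "norm (q e) \<le> (SUP w\<in>E. norm (q w))" if "e \<in> E" for e
    using that by (rule cSUP_upper2) simp
qed simp

end

theorem proposition3p6:
  fixes E :: "complex set" and q :: "complex \<Rightarrow> complex" and n :: nat
    and zs \<zeta>s :: "complex list"
  assumes "E \<subseteq> ball 0 1" and "infinite E"
    and "circle_null (nontangential_limit_points E)"
    and "admissible_q E q"
    and "length zs = n" and "set zs \<subseteq> closure E \<inter> ball 0 1"
    and "length \<zeta>s = n + 1" and "set \<zeta>s \<subseteq> closure E \<inter> ball 0 1"
    and "Vf q zs = Vn q E n" and "Vf q \<zeta>s = Vn q E (n + 1)"
  shows "muf \<zeta>s * Mf q E zs \<le> real (n + 1) * (SUP z\<in>E. norm (q z))"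
proof -
  let ?Q = "SUP z\<in>E. norm (q z)"
  have pos: "0 < Vn q E n"
    using Vn_pos[OF assms(1,4,2)] .
  have M: "Vn q E n * Mf q E zs \<le> Vn q E (Suc n)"
    using Vn_mult_Mf_le[OF assms(1,4,2,6)] assms(5,9) by simp
  have "inverse (norm (Bk \<zeta>s k (\<zeta>s ! k))) * Mf q E zs \<le> ?Q" if "k < n + 1" for k
  proof -
    let ?a = "norm (q (\<zeta>s ! k))" and ?P = "norm (Bk \<zeta>s k (\<zeta>s ! k))"
    have "Vn q E n * Mf q E zs \<le> Vn q E n * (?a * ?P)"
      using M Vn_Suc_le_Vn_mult_Bk[OF assms(1,4), of \<zeta>s n k] assms(7,8,10) that by (simp add: mult.assoc)
    then have "Mf q E zs \<le> ?a * ?P"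
      using pos by simp
    then have "inverse ?P * Mf q E zs \<le> ?a"
      by (cases "?P = 0") (simp_all add: field_simps)
    also have "?a \<le> ?Q"
      using norm_q_le_SUP_closure[OF assms(1,4)] assms(8) nth_mem[of k \<zeta>s] assms(7) that
      by (simp add: subset_iff)
    finally show ?thesis .
  qed
  then have "muf \<zeta>s * Mf q E zs \<le> (\<Sum>k<n + 1. ?Q)"
    unfolding muf_def assms(7) sum_distrib_right by (intro sum_mono) auto
  then show ?thesis
    by simp
qed

end
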